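(* Let $(J,{\sf hn})$ be a hyperbolic Banach space where $J$ is a cone with joins, and let $\tau$ be the chronological topology induced by ${\sf hn}$. Then the intersection of any countable family of $\tau$-open and $\tau$-dense subsets of $J$ is $\tau$-dense.
   Context: A prewedge is a set $W$ with a commutative associative addition with neutral element $0$ and a multiplication $[0,\infty)\times W\to W$ such that $\lambda(\eta v)=(\lambda\eta)v$, $0v=0$, $1v=v$, $(\lambda+\eta)v=\lambda v+\eta v$, $\lambda(v+w)=\lambda v+\lambda w$; it carries the preorder $v\le w$ iff $v+z=w$ for some $z$. A wedge is a prewedge in which $\le$ is antisymmetric and $v=\sup_{\eta<1}\eta v$ for every $v$. A cone is a wedge in which every directed subset (one in which every finite subset, including the empty one, has an upper bound in it) has a supremum. A cone with joins is a cone $J$ in which every subset $A$ has an infimum and $\inf(v+A)=v+\inf A$ for all $v\in J$, $A\subset J$. A hyperbolic norm on $J$ is a map ${\sf hn}:J\to[0,\infty]$ with ${\sf hn}(0)=0$ and ${\sf hn}(\lambda_1v_1+\lambda_2v_2)\ge\lambda_1{\sf hn}(v_1)+\lambda_2{\sf hn}(v_2)$ for all $\lambda_i\ge0$; a hyperbolic Banach space is a cone with a hyperbolic norm. Write $v\ll w$ if there is $z$ with ${\sf hn}(z)>0$ and $v+z=w$. The chronological topology is the topology generated by the sets $I^+(v):=\{w:v\ll w\}$ and $I^-(v):=\{w:w\ll v\}$, $v\in J$. *)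

theory Defs
  imports "HOL-Analysis.Analysis" "HOL-Library.Extended_Nonnegative_Real"
begin

text \<open>A (pre)wedge structure on the whole type 'a, given by an addition, a neutral
element and a multiplication by nonnegative reals (values of smul at negative
scalars are irrelevant).\<close>

definition prewedge :: "('a \<Rightarrow> 'a \<Rightarrow> 'a) \<Rightarrow> 'a \<Rightarrow> (real \<Rightarrow> 'a \<Rightarrow> 'a) \<Rightarrow> bool" where
  "prewedge add z smul \<longleftrightarrow>
     (\<forall>u v w. add (add u v) w = add u (add v w)) \<and>
     (\<forall>v w. add v w = add w v) \<and>
     (\<forall>v. add z v = v) \<and>
     (\<forall>l e v. l \<ge> 0 \<longrightarrow> e \<ge> 0 \<longrightarrow> smul l (smul e v) = smul (l * e) v) \<and>
     (\<forall>v. smul 0 v = z) \<and>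
     (\<forall>v. smul 1 v = v) \<and>
     (\<forall>l e v. l \<ge> 0 \<longrightarrow> e \<ge> 0 \<longrightarrow> smul (l + e) v = add (smul l v) (smul e v)) \<and>
     (\<forall>l v w. l \<ge> 0 \<longrightarrow> smul l (add v w) = add (smul l v) (smul l w))"

definition wle :: "('a \<Rightarrow> 'a \<Rightarrow> 'a) \<Rightarrow> 'a \<Rightarrow> 'a \<Rightarrow> bool" where
  "wle add v w \<longleftrightarrow> (\<exists>z. add v z = w)"

definition is_sup_w :: "('a \<Rightarrow> 'a \<Rightarrow> 'a) \<Rightarrow> 'a set \<Rightarrow> 'a \<Rightarrow> bool" where
  "is_sup_w add A s \<longleftrightarrow> (\<forall>a\<in>A. wle add a s) \<and> (\<forall>u. (\<forall>a\<in>A. wle add a u) \<longrightarrow> wle add s u)"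

definition is_inf_w :: "('a \<Rightarrow> 'a \<Rightarrow> 'a) \<Rightarrow> 'a set \<Rightarrow> 'a \<Rightarrow> bool" where
  "is_inf_w add A i \<longleftrightarrow> (\<forall>a\<in>A. wle add i a) \<and> (\<forall>u. (\<forall>a\<in>A. wle add u a) \<longrightarrow> wle add u i)"

definition wedge :: "('a \<Rightarrow> 'a \<Rightarrow> 'a) \<Rightarrow> 'a \<Rightarrow> (real \<Rightarrow> 'a \<Rightarrow> 'a) \<Rightarrow> bool" where
  "wedge add z smul \<longleftrightarrow> prewedge add z smul \<and>
     (\<forall>v w. wle add v w \<longrightarrow> wle add w v \<longrightarrow> v = w) \<and>
     (\<forall>v. is_sup_w add {smul e v | e. 0 \<le> e \<and> e < 1} v)"

definition directed_w :: "('a \<Rightarrow> 'a \<Rightarrow> 'a) \<Rightarrow> 'a set \<Rightarrow> bool" where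
  "directed_w add A \<longleftrightarrow> (\<forall>F. finite F \<longrightarrow> F \<subseteq> A \<longrightarrow> (\<exists>u\<in>A. \<forall>x\<in>F. wle add x u))"

definition cone :: "('a \<Rightarrow> 'a \<Rightarrow> 'a) \<Rightarrow> 'a \<Rightarrow> (real \<Rightarrow> 'a \<Rightarrow> 'a) \<Rightarrow> bool" where
  "cone add z smul \<longleftrightarrow> wedge add z smul \<and>
     (\<forall>A. directed_w add A \<longrightarrow> (\<exists>s. is_sup_w add A s))"

definition cone_with_joins :: "('a \<Rightarrow> 'a \<Rightarrow> 'a) \<Rightarrow> 'a \<Rightarrow> (real \<Rightarrow> 'a \<Rightarrow> 'a) \<Rightarrow> bool" where
  "cone_with_joins add z smul \<longleftrightarrow> cone add z smul \<and>
     (\<forall>A. \<exists>i. is_inf_w add A i \<and> (\<forall>v. is_inf_w add (add v ` A) (add v i)))"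

definition hyperbolic_norm ::
  "('a \<Rightarrow> 'a \<Rightarrow> 'a) \<Rightarrow> 'a \<Rightarrow> (real \<Rightarrow> 'a \<Rightarrow> 'a) \<Rightarrow> ('a \<Rightarrow> ennreal) \<Rightarrow> bool" where
  "hyperbolic_norm add z smul hn \<longleftrightarrow> hn z = 0 \<and>
     (\<forall>l1 l2 v1 v2. l1 \<ge> 0 \<longrightarrow> l2 \<ge> 0 \<longrightarrow>
        hn (add (smul l1 v1) (smul l2 v2)) \<ge> ennreal l1 * hn v1 + ennreal l2 * hn v2)"

definition chron_less :: "('a \<Rightarrow> 'a \<Rightarrow> 'a) \<Rightarrow> ('a \<Rightarrow> ennreal) \<Rightarrow> 'a \<Rightarrow> 'a \<Rightarrow> bool" where
  "chron_less add hn v w \<longleftrightarrow> (\<exists>z. hn z > 0 \<and> add v z = w)"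

text \<open>Chronological topology on the whole carrier: generated by the sets I^+(v), I^-(v)
  (the whole space is included explicitly, as the empty finite intersection of subbasic sets).\<close>
definition chron_topology :: "('a \<Rightarrow> 'a \<Rightarrow> 'a) \<Rightarrow> ('a \<Rightarrow> ennreal) \<Rightarrow> 'a topology" where
  "chron_topology add hn = topology_generated_by
     (insert UNIV ({{w. chron_less add hn v w} | v. True} \<union> {{w. chron_less add hn w v} | v. True}))"

end

theory Submission
  imports Defs
begin

text \<open>A Baire category argument in which completeness is replaced by the existence of infima.
  The chronological diamonds \<open>I\<^sup>+(L) \<inter> I\<^sup>-(C)\<close> with \<open>L\<close>, \<open>C\<close> finite form a base of the
  topology. Since \<open>hn (y/2) \<ge> hn y / 2\<close>, every relation \<open>v \<ll> w\<close> splits as \<open>v \<ll> m \<ll> w\<close>,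
  so each point of a diamond lies in a smaller diamond whose causal closure
  \<open>{w. L \<le> w \<le> C}\<close> stays inside the original one. For dense open sets \<open>U\<^sub>n\<close> and a
  nonempty open \<open>G\<close> this yields diamonds \<open>D\<^sub>0 \<subseteq> G\<close> with the causal closure of \<open>D\<^sub>n\<^sub>+\<^sub>1\<close>
  inside \<open>D\<^sub>n \<inter> U\<^sub>n\<close>. Any lower endpoint lies below any upper endpoint (both are separated
  by a point of a common diamond), so the infimum of all upper endpoints lies in every causal
  closure, hence in \<open>G \<inter> \<Inter>\<^sub>n U\<^sub>n\<close>.\<close>

lemma generate_topology_on_finite_Inter_nbhd:
  assumes "generate_topology_on S U" "x \<in> U"
  shows "\<exists>F. finite F \<and> F \<subseteq> S \<and> x \<in> \<Inter>F \<and> \<Inter>F \<subseteq> U"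
  using assms
proof (induction arbitrary: x rule: generate_topology_on.induct)
  case Empty
  then show ?case by simp
next
  case (Int a b)
  obtain F G where "finite F" "F \<subseteq> S" "x \<in> \<Inter>F" "\<Inter>F \<subseteq> a"
    and "finite G" "G \<subseteq> S" "x \<in> \<Inter>G" "\<Inter>G \<subseteq> b"
    using Int.IH Int.prems by (meson IntD1 IntD2)
  then show ?case
    by (intro exI[of _ "F \<union> G"]) auto
next
  case (UN K)
  then show ?case by (meson UnionE Union_upper order_trans)
next
  case (Basis s)
  then show ?case by (intro exI[of _ "{s}"]) auto
qed

definition chron_diamond :: "('a \<Rightarrow> 'a \<Rightarrow> 'a) \<Rightarrow> ('a \<Rightarrow> ennreal) \<Rightarrow> 'a set \<Rightarrow> 'a set \<Rightarrow> 'a set" where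
  "chron_diamond add hn L C = {w. (\<forall>l\<in>L. chron_less add hn l w) \<and> (\<forall>c\<in>C. chron_less add hn w c)}"

definition causal_diamond :: "('a \<Rightarrow> 'a \<Rightarrow> 'a) \<Rightarrow> 'a set \<Rightarrow> 'a set \<Rightarrow> 'a set" where
  "causal_diamond add L C = {w. (\<forall>l\<in>L. wle add l w) \<and> (\<forall>c\<in>C. wle add w c)}"

lemma chron_less_imp_wle: "chron_less add hn v w \<Longrightarrow> wle add v w"
  unfolding chron_less_def wle_def by blast

lemma chron_diamond_subset_causal_diamond: "chron_diamond add hn L C \<subseteq> causal_diamond add L C"
  unfolding chron_diamond_def causal_diamond_def using chron_less_imp_wle by fast

lemma topspace_chron_topology [simp]: "topspace (chron_topology add hn) = UNIV"
  unfolding chron_topology_def by simp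

lemma chron_diamond_eq_Inter:
  "chron_diamond add hn L C =
     \<Inter>(insert UNIV ((\<lambda>v. {w. chron_less add hn v w}) ` L \<union> (\<lambda>v. {w. chron_less add hn w v}) ` C))"
  unfolding chron_diamond_def by auto

lemma openin_chron_diamond:
  assumes "finite L" "finite C"
  shows "openin (chron_topology add hn) (chron_diamond add hn L C)"
  unfolding chron_diamond_eq_Inter chron_topology_def
  using assms by (intro openin_Inter) (auto intro!: topology_generated_by_Basis)

lemma openin_chron_topology_imp_chron_diamond:
  assumes "openin (chron_topology add hn) U" "x \<in> U"
  shows "\<exists>L C. finite L \<and> finite C \<and> x \<in> chron_diamond add hn L C \<and> chron_diamond add hn L C \<subseteq> U"
proof -
  define P where "P = (\<lambda>v. {w. chron_less add hn v w})"
  define M where "M = (\<lambda>v. {w. chron_less add hn w v})"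
  have "{{w. chron_less add hn v w} | v. True} = range P" "{{w. chron_less add hn w v} | v. True} = range M"
    unfolding P_def M_def by blast+
  then have gen: "generate_topology_on (insert UNIV (range P \<union> range M)) U"
    using assms(1) unfolding chron_topology_def openin_topology_generated_by_iff by simp
  obtain F where F: "finite F" "F \<subseteq> insert UNIV (range P \<union> range M)" "x \<in> \<Inter>F" "\<Inter>F \<subseteq> U"
    using generate_topology_on_finite_Inter_nbhd[OF gen assms(2)] by blast
  obtain L where L: "finite L" "F \<inter> range P = P ` L"
    using finite_subset_image[OF finite_Int[OF disjI1[OF F(1)]] Int_lower2] by metis
  obtain C where C: "finite C" "F \<inter> range M = M ` C"
    using finite_subset_image[OF finite_Int[OF disjI1[OF F(1)]] Int_lower2] by metis
  have "insert UNIV F = insert UNIV (F \<inter> range P \<union> F \<inter> range M)"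
    using F(2) by auto
  then have "\<Inter>F = \<Inter>(insert UNIV (P ` L \<union> M ` C))"
    unfolding L(2)[symmetric] C(2)[symmetric] by (metis Inter_insert Int_UNIV_left)
  also have "\<dots> = chron_diamond add hn L C"
    unfolding chron_diamond_eq_Inter P_def M_def ..
  finally have "\<Inter>F = chron_diamond add hn L C" .
  then show ?thesis
    using L(1) C(1) F(3,4) by auto
qed

locale prewedge_space =
  fixes add :: "'a \<Rightarrow> 'a \<Rightarrow> 'a" and z :: 'a and smul :: "real \<Rightarrow> 'a \<Rightarrow> 'a"
  assumes prewedge: "prewedge add z smul"
begin

lemma add_assoc: "add (add u v) w = add u (add v w)"
  using prewedge unfolding prewedge_def by blast

lemma add_commute: "add v w = add w v"
  using prewedge unfolding prewedge_def by blast

lemma add_0_left: "add z v = v"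
  using prewedge unfolding prewedge_def by blast

lemma smul_0_left: "smul 0 v = z"
  using prewedge unfolding prewedge_def by blast

lemma smul_1_left: "smul 1 v = v"
  using prewedge unfolding prewedge_def by blast

lemma smul_add_left: "l \<ge> 0 \<Longrightarrow> e \<ge> 0 \<Longrightarrow> smul (l + e) v = add (smul l v) (smul e v)"
  using prewedge unfolding prewedge_def by blast

lemma wle_trans: "wle add u v \<Longrightarrow> wle add v w \<Longrightarrow> wle add u w"
  unfolding wle_def by (metis add_assoc)

lemma nested_causal_diamonds_have_common_point:
  assumes inf: "\<And>A. \<exists>i. is_inf_w add A i"
    and nonempty: "\<And>n. causal_diamond add (L n) (C n) \<noteq> {}"
    and nested: "\<And>n. causal_diamond add (L (Suc n)) (C (Suc n)) \<subseteq> causal_diamond add (L n) (C n)"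
  shows "\<exists>s. \<forall>n. s \<in> causal_diamond add (L n) (C n)"
proof -
  define D where "D n = causal_diamond add (L n) (C n)" for n
  have D_antimono: "D k \<subseteq> D n" if "n \<le> k" for n k
    using lift_Suc_antimono_le[of D, OF nested[folded D_def] that] .
  have lower_le_upper: "wle add l c" if "l \<in> L n" "c \<in> C m" for l c n m
  proof -
    obtain x where "x \<in> D (max n m)"
      using nonempty unfolding D_def by blast
    then have "x \<in> D n" "x \<in> D m"
      using D_antimono by (meson max.cobounded1 max.cobounded2 subsetD)+
    then have "wle add l x" "wle add x c"
      using that unfolding D_def causal_diamond_def by simp_all
    then show ?thesis
      by (rule wle_trans)
  qed
  obtain s where s: "is_inf_w add (\<Union>n. C n) s"
    using inf by blast
  have "s \<in> causal_diamond add (L n) (C n)" for n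
  proof -
    have "wle add s c" if "c \<in> C n" for c
      using s that unfolding is_inf_w_def by blast
    moreover have "wle add l s" if "l \<in> L n" for l
      using s lower_le_upper[OF that] unfolding is_inf_w_def by blast
    ultimately show ?thesis
      unfolding causal_diamond_def by blast
  qed
  then show ?thesis by blast
qed

end

locale hyperbolic_prewedge = prewedge_space +
  fixes hn :: "'a \<Rightarrow> ennreal"
  assumes hyperbolic_norm: "hyperbolic_norm add z smul hn"
begin

lemma hn_superlinear:
  "l1 \<ge> 0 \<Longrightarrow> l2 \<ge> 0 \<Longrightarrow>
    ennreal l1 * hn v1 + ennreal l2 * hn v2 \<le> hn (add (smul l1 v1) (smul l2 v2))"
  using hyperbolic_norm unfolding hyperbolic_norm_def by blast

lemma hn_superadditive: "hn v + hn w \<le> hn (add v w)"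
  using hn_superlinear[of 1 1 v w] by (simp add: smul_1_left)

lemma hn_smul_ge:
  assumes "l \<ge> 0"
  shows "ennreal l * hn v \<le> hn (smul l v)"
proof -
  have "ennreal l * hn v \<le> hn (add (smul l v) (smul 0 v))"
    using hn_superlinear[of l 0 v v] assms by simp
  also have "add (smul l v) (smul 0 v) = smul l v"
    by (simp only: smul_0_left add_commute[of _ z] add_0_left)
  finally show ?thesis .
qed

lemma hn_smul_pos:
  assumes "l > 0" "hn v > 0"
  shows "hn (smul l v) > 0"
proof -
  have "0 < ennreal l * hn v"
    using assms by (simp add: ennreal_zero_less_mult_iff)
  also have "\<dots> \<le> hn (smul l v)"
    using assms(1) by (simp add: hn_smul_ge)
  finally show ?thesis .
qed

lemma chron_less_dense:
  assumes "chron_less add hn u w"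
  shows "\<exists>m. chron_less add hn u m \<and> chron_less add hn m w"
proof -
  obtain y where y: "hn y > 0" "add u y = w"
    using assms unfolding chron_less_def by blast
  define h where "h = smul (1/2) y"
  have "add h h = y"
    using smul_add_left[of "1/2" "1/2" y] smul_1_left unfolding h_def by simp
  then have "add (add u h) h = w"
    using y(2) add_assoc by metis
  moreover have "hn h > 0"
    using hn_smul_pos[of "1/2" y] y(1) unfolding h_def by simp
  ultimately show ?thesis
    unfolding chron_less_def by blast
qed

lemma wle_chron_less_trans:
  assumes "wle add u v" "chron_less add hn v w"
  shows "chron_less add hn u w"
proof -
  obtain p q where "add u p = v" "add v q = w" "hn q > 0"
    using assms unfolding wle_def chron_less_def by blast
  moreover have "hn q \<le> hn (add p q)"
    by (rule order_trans[OF _ hn_superadditive]) simp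
  ultimately show ?thesis
    unfolding chron_less_def by (metis add_assoc order.strict_trans2)
qed

lemma chron_less_wle_trans:
  assumes "chron_less add hn u v" "wle add v w"
  shows "chron_less add hn u w"
proof -
  obtain p q where "add u q = v" "add v p = w" "hn q > 0"
    using assms unfolding wle_def chron_less_def by blast
  moreover have "hn q \<le> hn (add q p)"
    by (rule order_trans[OF _ hn_superadditive]) simp
  ultimately show ?thesis
    unfolding chron_less_def by (metis add_assoc order.strict_trans2)
qed

lemma chron_diamond_shrink:
  assumes "finite L" "finite C" "x \<in> chron_diamond add hn L C"
  shows "\<exists>L' C'. finite L' \<and> finite C' \<and> x \<in> chron_diamond add hn L' C' \<and>
    causal_diamond add L' C' \<subseteq> chron_diamond add hn L C"
proof -
  have "\<forall>l\<in>L. chron_less add hn l x" "\<forall>c\<in>C. chron_less add hn x c"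
    using assms(3) unfolding chron_diamond_def by simp_all
  then have "\<forall>l\<in>L. \<exists>m. chron_less add hn l m \<and> chron_less add hn m x"
    and "\<forall>c\<in>C. \<exists>m. chron_less add hn x m \<and> chron_less add hn m c"
    by (metis chron_less_dense)+
  then obtain g k where g: "\<forall>l\<in>L. chron_less add hn l (g l) \<and> chron_less add hn (g l) x"
    and k: "\<forall>c\<in>C. chron_less add hn x (k c) \<and> chron_less add hn (k c) c"
    by metis
  have "x \<in> chron_diamond add hn (g ` L) (k ` C)"
    using g k unfolding chron_diamond_def by simp
  moreover have "causal_diamond add (g ` L) (k ` C) \<subseteq> chron_diamond add hn L C"
  proof
    fix w
    assume w: "w \<in> causal_diamond add (g ` L) (k ` C)"
    have "chron_less add hn l w" if "l \<in> L" for l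
      using chron_less_wle_trans[of l "g l" w] g w that unfolding causal_diamond_def by simp
    moreover have "chron_less add hn w c" if "c \<in> C" for c
      using wle_chron_less_trans[of w "k c" c] k w that unfolding causal_diamond_def by simp
    ultimately show "w \<in> chron_diamond add hn L C"
      unfolding chron_diamond_def by simp
  qed
  ultimately show ?thesis
    using assms(1,2) by blast
qed

lemma chron_diamond_refine_dense_open:
  assumes "finite L" "finite C" "chron_diamond add hn L C \<noteq> {}"
    and U: "openin (chron_topology add hn) U" "(chron_topology add hn) closure_of U = UNIV"
  shows "\<exists>L' C'. finite L' \<and> finite C' \<and> chron_diamond add hn L' C' \<noteq> {} \<and>
    causal_diamond add L' C' \<subseteq> chron_diamond add hn L C \<inter> U"
proof -
  have open_diamond: "openin (chron_topology add hn) (chron_diamond add hn L C)"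
    using assms(1,2) by (rule openin_chron_diamond)
  have "\<forall>T. openin (chron_topology add hn) T \<and> T \<noteq> {} \<longrightarrow> U \<inter> T \<noteq> {}"
    using U(2) dense_intersects_open by (metis topspace_chron_topology)
  then obtain x where x: "x \<in> chron_diamond add hn L C \<inter> U"
    using open_diamond assms(3) by blast
  obtain L1 C1 where 1: "finite L1" "finite C1" "x \<in> chron_diamond add hn L1 C1"
      "chron_diamond add hn L1 C1 \<subseteq> chron_diamond add hn L C \<inter> U"
    using openin_chron_topology_imp_chron_diamond[OF openin_Int[OF open_diamond U(1)] x] by blast
  obtain L' C' where 2: "finite L'" "finite C'" "x \<in> chron_diamond add hn L' C'"
      "causal_diamond add L' C' \<subseteq> chron_diamond add hn L1 C1"
    using chron_diamond_shrink[OF 1(1-3)] by blast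
  show ?thesis
    using 1(4) 2 by blast
qed

lemma nested_chron_diamonds_exist:
  fixes U :: "nat \<Rightarrow> 'a set"
  assumes U_open: "\<And>n. openin (chron_topology add hn) (U n)"
    and U_dense: "\<And>n. (chron_topology add hn) closure_of (U n) = UNIV"
    and G: "openin (chron_topology add hn) G" "G \<noteq> {}"
  shows "\<exists>L C. chron_diamond add hn (L 0) (C 0) \<subseteq> G \<and> (\<forall>n. chron_diamond add hn (L n) (C n) \<noteq> {}) \<and>
    (\<forall>n. causal_diamond add (L (Suc n)) (C (Suc n)) \<subseteq> chron_diamond add hn (L n) (C n) \<inter> U n)"
proof -
  define good where "good D \<longleftrightarrow> finite (fst D) \<and> finite (snd D) \<and>
    chron_diamond add hn (fst D) (snd D) \<noteq> {} \<and> chron_diamond add hn (fst D) (snd D) \<subseteq> G" for D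
  define refines where "refines n D D' \<longleftrightarrow>
    causal_diamond add (fst D') (snd D') \<subseteq> chron_diamond add hn (fst D) (snd D) \<inter> U n" for n D D'
  obtain x where "x \<in> G"
    using G(2) by blast
  then obtain L C where "finite L" "finite C" "x \<in> chron_diamond add hn L C"
      "chron_diamond add hn L C \<subseteq> G"
    using openin_chron_topology_imp_chron_diamond[OF G(1)] by blast
  then have "good (L, C)"
    unfolding good_def by auto
  moreover have "\<exists>D'. good D' \<and> refines n D D'" if "good D" for D n
  proof -
    have "finite (fst D)" "finite (snd D)" "chron_diamond add hn (fst D) (snd D) \<noteq> {}"
      using that unfolding good_def by simp_all
    then obtain L' C' where L'C': "finite L'" "finite C'" "chron_diamond add hn L' C' \<noteq> {}"
        "causal_diamond add L' C' \<subseteq> chron_diamond add hn (fst D) (snd D) \<inter> U n"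
      using chron_diamond_refine_dense_open[OF _ _ _ U_open U_dense] by metis
    have "chron_diamond add hn L' C' \<subseteq> causal_diamond add L' C'"
      by (rule chron_diamond_subset_causal_diamond)
    also have "\<dots> \<subseteq> chron_diamond add hn (fst D) (snd D)"
      using L'C'(4) by (rule le_infE)
    also have "\<dots> \<subseteq> G"
      using that unfolding good_def by simp
    finally have "good (L', C') \<and> refines n D (L', C')"
      using L'C' unfolding good_def refines_def by simp
    then show ?thesis ..
  qed
  ultimately obtain D where D: "\<And>n. good (D n)" "\<And>n. refines n (D n) (D (Suc n))"
    using dependent_nat_choice[of "\<lambda>_. good" refines] by metis
  then show ?thesis
    unfolding good_def refines_def
    by (intro exI[of _ "\<lambda>n. fst (D n)"] exI[of _ "\<lambda>n. snd (D n)"]) simp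
qed

lemma chron_topology_Baire:
  fixes U :: "nat \<Rightarrow> 'a set"
  assumes inf: "\<And>A. \<exists>i. is_inf_w add A i"
    and U_open: "\<And>n. openin (chron_topology add hn) (U n)"
    and U_dense: "\<And>n. (chron_topology add hn) closure_of (U n) = UNIV"
  shows "(chron_topology add hn) closure_of (\<Inter>n. U n) = UNIV"
proof -
  have "(\<Inter>n. U n) \<inter> G \<noteq> {}" if G: "openin (chron_topology add hn) G" "G \<noteq> {}" for G
  proof -
    obtain L C where L0C0: "chron_diamond add hn (L 0) (C 0) \<subseteq> G"
      and nonempty: "\<And>n. chron_diamond add hn (L n) (C n) \<noteq> {}"
      and refines: "\<And>n. causal_diamond add (L (Suc n)) (C (Suc n)) \<subseteq> chron_diamond add hn (L n) (C n) \<inter> U n"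
      using nested_chron_diamonds_exist[of U G, OF U_open U_dense G] by blast
    have chron_causal: "chron_diamond add hn (L n) (C n) \<subseteq> causal_diamond add (L n) (C n)" for n
      by (rule chron_diamond_subset_causal_diamond)
    have "causal_diamond add (L n) (C n) \<noteq> {}" for n
      using nonempty[of n] chron_causal[of n] by blast
    moreover have "causal_diamond add (L (Suc n)) (C (Suc n)) \<subseteq> causal_diamond add (L n) (C n)" for n
      using refines[of n] chron_causal[of n] by blast
    ultimately obtain s where s: "\<And>n. s \<in> causal_diamond add (L n) (C n)"
      using nested_causal_diamonds_have_common_point[OF inf] by blast
    have "s \<in> U n" for n
      using s[of "Suc n"] refines[of n] by blast
    moreover have "s \<in> G"
      using s[of 1] refines[of 0] L0C0 by auto
    ultimately show ?thesis
      by blast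
  qed
  then show ?thesis
    using dense_intersects_open[of "chron_topology add hn" "\<Inter>n. U n"] by auto
qed

end

theorem mainTheorem18:
  fixes add :: "'a \<Rightarrow> 'a \<Rightarrow> 'a" and z :: 'a and smul :: "real \<Rightarrow> 'a \<Rightarrow> 'a"
    and hn :: "'a \<Rightarrow> ennreal" and \<F> :: "'a set set"
  assumes "cone_with_joins add z smul"
    and "hyperbolic_norm add z smul hn"
    and "countable \<F>"
    and "\<And>U. U \<in> \<F> \<Longrightarrow> openin (chron_topology add hn) U"
    and "\<And>U. U \<in> \<F> \<Longrightarrow> (chron_topology add hn) closure_of U = UNIV"
  shows "(chron_topology add hn) closure_of (\<Inter>\<F>) = UNIV"
proof (cases "\<F> = {}")
  case True
  then show ?thesis by simp
next
  case False
  interpret hyperbolic_prewedge add z smul hn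
    using assms(1,2) by unfold_locales (simp_all add: cone_with_joins_def cone_def wedge_def)
  have "\<And>A. \<exists>i. is_inf_w add A i"
    using assms(1) unfolding cone_with_joins_def by blast
  moreover have "\<Inter>\<F> = (\<Inter>n. from_nat_into \<F> n)"
    using range_from_nat_into[OF False assms(3)] by simp
  ultimately show ?thesis
    using chron_topology_Baire[of "from_nat_into \<F>"] assms(4,5) from_nat_into[OF False] by simp
qed

end
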